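(* Let $l$ be a positive integer and let $G_l$ be the graph obtained by identifying a vertex of the complete graph $K_{l+2}$ with a vertex of the Cartesian product $P_{l+1}\times P_2$. Then $k(G_l)=1$ and $p(G_l)=l$.
   Context: All graphs are finite and simple. $P_n$ is the path on $n$ vertices; the Cartesian product $G_1\times G_2$ has vertex set $V(G_1)\times V(G_2)$, with $(u_1,u_2)$ adjacent to $(v_1,v_2)$ iff either $u_1=v_1$ and $u_2v_2\in E(G_2)$, or $u_2=v_2$ and $u_1v_1\in E(G_1)$. For an acyclic digraph $D$, the competition graph $C(D)$ is the graph on $V(D)$ in which distinct $u,v$ are adjacent iff they have a common out-neighbor in $D$. The competition number $k(G)$ is the smallest $k\ge 0$ such that $G$ together with $k$ new isolated vertices is the competition graph of some acyclic digraph. The phylogeny graph $P(D)$ of an acyclic digraph $D$ is the graph on $V(D)$ in which distinct vertices $u,v$ are adjacent iff $(u,v)\in A(D)$, or $(v,u)\in A(D)$, or they have a common out-neighbor in $D$. A phylogeny digraph for a graph $G$ is an acyclic digraph $D$ such that $G$ is an induced subgraph of $P(D)$ and $D$ has no arc from a vertex of $V(D)\setminus V(G)$ to a vertex of $V(G)$. The phylogeny number $p(G)$ is the minimum of $|V(D)\setminus V(G)|$ over all phylogeny digraphs $D$ for $G$. *)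

theory Defs
  imports Main
begin

text \<open>A finite simple graph is given by a vertex set V and a symmetric, irreflexive
  adjacency predicate E (only relevant on V).\<close>

definition path_V :: "nat \<Rightarrow> nat set" where
  "path_V n = {..<n}"

definition path_E :: "nat \<Rightarrow> nat \<Rightarrow> nat \<Rightarrow> bool" where
  "path_E n i j \<longleftrightarrow> i < n \<and> j < n \<and> (i + 1 = j \<or> j + 1 = i)"

definition complete_V :: "nat \<Rightarrow> nat set" where
  "complete_V n = {..<n}"

definition complete_E :: "nat \<Rightarrow> nat \<Rightarrow> nat \<Rightarrow> bool" where
  "complete_E n i j \<longleftrightarrow> i < n \<and> j < n \<and> i \<noteq> j"

definition cart_V :: "'a set \<Rightarrow> 'b set \<Rightarrow> ('a \<times> 'b) set" where
  "cart_V V1 V2 = V1 \<times> V2"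

definition cart_E :: "'a set \<Rightarrow> ('a \<Rightarrow> 'a \<Rightarrow> bool) \<Rightarrow> 'b set \<Rightarrow> ('b \<Rightarrow> 'b \<Rightarrow> bool)
    \<Rightarrow> 'a \<times> 'b \<Rightarrow> 'a \<times> 'b \<Rightarrow> bool" where
  "cart_E V1 E1 V2 E2 x y \<longleftrightarrow> x \<in> V1 \<times> V2 \<and> y \<in> V1 \<times> V2 \<and>
     ((fst x = fst y \<and> E2 (snd x) (snd y)) \<or> (snd x = snd y \<and> E1 (fst x) (fst y)))"

text \<open>Identifying vertex a of G1 with vertex b of G2: vertex Inr b is replaced by Inl a.\<close>
definition glue_map :: "'a \<Rightarrow> 'b \<Rightarrow> 'a + 'b \<Rightarrow> 'a + 'b" where
  "glue_map a b x = (case x of Inl u \<Rightarrow> Inl u | Inr v \<Rightarrow> (if v = b then Inl a else Inr v))"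

definition glue_V :: "'a set \<Rightarrow> 'a \<Rightarrow> 'b set \<Rightarrow> 'b \<Rightarrow> ('a + 'b) set" where
  "glue_V V1 a V2 b = Inl ` V1 \<union> Inr ` (V2 - {b})"

definition glue_E :: "('a \<Rightarrow> 'a \<Rightarrow> bool) \<Rightarrow> 'a \<Rightarrow> ('b \<Rightarrow> 'b \<Rightarrow> bool) \<Rightarrow> 'b
    \<Rightarrow> 'a + 'b \<Rightarrow> 'a + 'b \<Rightarrow> bool" where
  "glue_E E1 a E2 b x y \<longleftrightarrow> x \<noteq> y \<and>
     ((\<exists>u v. E1 u v \<and> x = Inl u \<and> y = Inl v) \<or>
      (\<exists>u v. E2 u v \<and> x = glue_map a b (Inr u) \<and> y = glue_map a b (Inr v)))"

definition Gl_V :: "nat \<Rightarrow> (nat + nat \<times> nat) set" where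
  "Gl_V l = glue_V (complete_V (l + 2)) 0 (cart_V (path_V (l + 1)) (path_V 2)) (0, 0)"

definition Gl_E :: "nat \<Rightarrow> nat + nat \<times> nat \<Rightarrow> nat + nat \<times> nat \<Rightarrow> bool" where
  "Gl_E l = glue_E (complete_E (l + 2)) 0 (cart_E (path_V (l + 1)) (path_E (l + 1)) (path_V 2) (path_E 2)) (0, 0)"

text \<open>Competition number: G together with k new isolated vertices (Inr 0, ..., Inr (k-1))
  is the competition graph of an acyclic digraph A on that vertex set.\<close>
definition competition_number :: "'a set \<Rightarrow> ('a \<Rightarrow> 'a \<Rightarrow> bool) \<Rightarrow> nat" where
  "competition_number V E = (LEAST k. \<exists>A :: (('a + nat) \<times> ('a + nat)) set.
     A \<subseteq> (Inl ` V \<union> Inr ` {..<k}) \<times> (Inl ` V \<union> Inr ` {..<k}) \<and> acyclic A \<and>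
     (\<forall>x \<in> Inl ` V \<union> Inr ` {..<k}. \<forall>y \<in> Inl ` V \<union> Inr ` {..<k}. x \<noteq> y \<longrightarrow>
        ((\<exists>u v. x = Inl u \<and> y = Inl v \<and> E u v) \<longleftrightarrow>
         (\<exists>w. (x, w) \<in> A \<and> (y, w) \<in> A))))"

text \<open>Phylogeny number: minimum number k of extra vertices (Inr 0, ..., Inr (k-1)) of an
  acyclic digraph D on V plus the extra vertices such that G is an induced subgraph of
  the phylogeny graph P(D) and there is no arc from an extra vertex to a vertex of G.\<close>
definition phylogeny_adj :: "('v \<times> 'v) set \<Rightarrow> 'v \<Rightarrow> 'v \<Rightarrow> bool" where
  "phylogeny_adj A x y \<longleftrightarrow> x \<noteq> y \<and>
     ((x, y) \<in> A \<or> (y, x) \<in> A \<or> (\<exists>w. (x, w) \<in> A \<and> (y, w) \<in> A))"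

definition phylogeny_number :: "'a set \<Rightarrow> ('a \<Rightarrow> 'a \<Rightarrow> bool) \<Rightarrow> nat" where
  "phylogeny_number V E = (LEAST k. \<exists>A :: (('a + nat) \<times> ('a + nat)) set.
     A \<subseteq> (Inl ` V \<union> Inr ` {..<k}) \<times> (Inl ` V \<union> Inr ` {..<k}) \<and> acyclic A \<and>
     (\<forall>i u. (Inr i, Inl u) \<notin> A) \<and>
     (\<forall>u \<in> V. \<forall>v \<in> V. u \<noteq> v \<longrightarrow> (E u v \<longleftrightarrow> phylogeny_adj A (Inl u) (Inl v))))"

end

theory Submission
  imports Defs
begin

text \<open>G_l has no isolated vertex, while an acyclic digraph has a vertex without out-neighbours,
  which competes with nobody; so k(G_l) \<ge> 1. One extra vertex suffices: it is the common prey
  of K_{l+2}, and the 3l + 1 edges of the ladder P_{l+1} x P_2 are realised as in-neighbourhoods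
  of vertices of G_l.

  In a phylogeny digraph D, every edge uv of G lies in the closed in-neighbourhood of some
  vertex w, and these neighbourhoods are cliques of G. Ladder edges lie in no triangle of G_l
  (the ladder is bipartite and meets K_{l+2} in a single vertex), so each ladder edge is a whole
  closed in-neighbourhood, and distinct edges need distinct vertices w. A source of D among the
  2l + 2 ladder vertices is no such w, hence 3l + 1 \<le> (2l + 1) + p(G_l), i.e. p(G_l) \<ge> l;
  an explicit digraph with l extra vertices attains this.\<close>

section \<open>Competition and phylogeny digraphs\<close>

definition competition_digraph ::
    "'a set \<Rightarrow> ('a \<Rightarrow> 'a \<Rightarrow> bool) \<Rightarrow> nat \<Rightarrow> (('a + nat) \<times> ('a + nat)) set \<Rightarrow> bool" where
  "competition_digraph V E k A \<longleftrightarrow>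
     A \<subseteq> (Inl ` V \<union> Inr ` {..<k}) \<times> (Inl ` V \<union> Inr ` {..<k}) \<and> acyclic A \<and>
     (\<forall>x \<in> Inl ` V \<union> Inr ` {..<k}. \<forall>y \<in> Inl ` V \<union> Inr ` {..<k}. x \<noteq> y \<longrightarrow>
        ((\<exists>u v. x = Inl u \<and> y = Inl v \<and> E u v) \<longleftrightarrow> (\<exists>w. (x, w) \<in> A \<and> (y, w) \<in> A)))"

definition phylogeny_digraph ::
    "'a set \<Rightarrow> ('a \<Rightarrow> 'a \<Rightarrow> bool) \<Rightarrow> nat \<Rightarrow> (('a + nat) \<times> ('a + nat)) set \<Rightarrow> bool" where
  "phylogeny_digraph V E k A \<longleftrightarrow>
     A \<subseteq> (Inl ` V \<union> Inr ` {..<k}) \<times> (Inl ` V \<union> Inr ` {..<k}) \<and> acyclic A \<and>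
     (\<forall>i u. (Inr i, Inl u) \<notin> A) \<and>
     (\<forall>u \<in> V. \<forall>v \<in> V. u \<noteq> v \<longrightarrow> (E u v \<longleftrightarrow> phylogeny_adj A (Inl u) (Inl v)))"

lemma competition_number_Least:
  "competition_number V E = (LEAST k. \<exists>A. competition_digraph V E k A)"
  unfolding competition_number_def competition_digraph_def ..

lemma phylogeny_number_Least:
  "phylogeny_number V E = (LEAST k. \<exists>A. phylogeny_digraph V E k A)"
  unfolding phylogeny_number_def phylogeny_digraph_def ..

lemma acyclic_if_rank_decreasing:
  fixes f :: "'a \<Rightarrow> 'b :: preorder"
  assumes "\<And>x y. (x, y) \<in> A \<Longrightarrow> f y < f x"
  shows "acyclic A"
proof -
  have "f y < f x" if "(x, y) \<in> A\<^sup>+" for x y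
    using that by induction (auto dest: assms intro: less_trans)
  then show ?thesis
    unfolding acyclic_def by blast
qed

lemma no_competition_digraph_0:
  assumes "finite V" and "\<forall>x\<in>V. \<exists>y\<in>V. x \<noteq> y \<and> E x y" and "V \<noteq> {}"
  shows "\<not> competition_digraph V E 0 A"
proof
  assume "competition_digraph V E 0 A"
  then have sub: "A \<subseteq> Inl ` V \<times> Inl ` V" and "acyclic A"
    and comp: "\<And>u v. u \<in> V \<Longrightarrow> v \<in> V \<Longrightarrow> u \<noteq> v \<Longrightarrow> E u v \<Longrightarrow> \<exists>w. (Inl u, w) \<in> A"
    unfolding competition_digraph_def by auto
  have "finite A"
    using sub assms(1) by (meson finite_SigmaI finite_imageI finite_subset)
  then have "wf (A\<inverse>)"
    using \<open>acyclic A\<close> by (rule finite_acyclic_wf_converse)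
  then obtain z where "z \<in> Inl ` V" and sink: "\<And>y. (z, y) \<notin> A"
    using \<open>V \<noteq> {}\<close> sub unfolding wf_eq_minimal by (metis converse_iff equals0I imageI mem_Sigma_iff subsetD)
  then obtain u where "u \<in> V" "z = Inl u" by blast
  with assms(2) comp sink show False by metis
qed

definition Inl_clique :: "('a \<Rightarrow> 'a \<Rightarrow> bool) \<Rightarrow> ('a + nat) set \<Rightarrow> bool" where
  "Inl_clique E C \<longleftrightarrow> (\<forall>x \<in> C. \<forall>y \<in> C. x \<noteq> y \<longrightarrow> (\<exists>u v. x = Inl u \<and> y = Inl v \<and> E u v))"

lemma Inl_clique_empty [simp]: "Inl_clique E {}"
  by (simp add: Inl_clique_def)

lemma Inl_clique_singleton [simp]: "Inl_clique E {x}"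
  by (simp add: Inl_clique_def)

lemma Inl_clique_subset: "Inl_clique E C \<Longrightarrow> D \<subseteq> C \<Longrightarrow> Inl_clique E D"
  unfolding Inl_clique_def by blast

lemma Inl_clique_pair: "E u v \<Longrightarrow> E v u \<Longrightarrow> Inl_clique E {Inl u, Inl v}"
  by (auto simp: Inl_clique_def)

lemma competition_digraphI:
  fixes N :: "'a + nat \<Rightarrow> ('a + nat) set" and r :: "'a + nat \<Rightarrow> 'b :: preorder"
  assumes sub: "\<And>x w. x \<in> N w \<Longrightarrow> x \<in> Inl ` V \<union> Inr ` {..<k} \<and> w \<in> Inl ` V \<union> Inr ` {..<k}"
    and rank: "\<And>x w. x \<in> N w \<Longrightarrow> r w < r x"
    and clique: "\<And>w. Inl_clique E (N w)"
    and cover: "\<And>u v. u \<in> V \<Longrightarrow> v \<in> V \<Longrightarrow> u \<noteq> v \<Longrightarrow> E u v \<Longrightarrow> \<exists>w. Inl u \<in> N w \<and> Inl v \<in> N w"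
  shows "competition_digraph V E k {(x, w). x \<in> N w}"
  unfolding competition_digraph_def
proof (intro conjI ballI impI)
  show "{(x, w). x \<in> N w} \<subseteq> (Inl ` V \<union> Inr ` {..<k}) \<times> (Inl ` V \<union> Inr ` {..<k})"
    using sub by blast
  show "acyclic {(x, w). x \<in> N w}"
    by (rule acyclic_if_rank_decreasing[of _ r]) (auto dest: rank)
  fix x y assume "x \<in> Inl ` V \<union> Inr ` {..<k}" "y \<in> Inl ` V \<union> Inr ` {..<k}" "x \<noteq> y"
  then show "(\<exists>u v. x = Inl u \<and> y = Inl v \<and> E u v) \<longleftrightarrow>
      (\<exists>w. (x, w) \<in> {(x, w). x \<in> N w} \<and> (y, w) \<in> {(x, w). x \<in> N w})"
    using clique cover unfolding Inl_clique_def by blast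
qed

lemma phylogeny_digraphI:
  fixes N :: "'a + nat \<Rightarrow> ('a + nat) set" and r :: "'a + nat \<Rightarrow> 'b :: preorder"
  assumes sub: "\<And>x w. x \<in> N w \<Longrightarrow> x \<in> Inl ` V \<union> Inr ` {..<k} \<and> w \<in> Inl ` V \<union> Inr ` {..<k}"
    and rank: "\<And>x w. x \<in> N w \<Longrightarrow> r w < r x"
    and sym: "\<And>u v. E u v \<Longrightarrow> E v u"
    and arc: "\<And>x v. x \<in> N (Inl v) \<Longrightarrow> \<exists>u. x = Inl u \<and> E u v"
    and clique: "\<And>w. Inl_clique E (N w)"
    and cover: "\<And>u v. u \<in> V \<Longrightarrow> v \<in> V \<Longrightarrow> u \<noteq> v \<Longrightarrow> E u v \<Longrightarrow>
      Inl u \<in> N (Inl v) \<or> Inl v \<in> N (Inl u) \<or> (\<exists>w. Inl u \<in> N w \<and> Inl v \<in> N w)"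
  shows "phylogeny_digraph V E k {(x, w). x \<in> N w}"
  unfolding phylogeny_digraph_def
proof (intro conjI ballI impI allI)
  show "{(x, w). x \<in> N w} \<subseteq> (Inl ` V \<union> Inr ` {..<k}) \<times> (Inl ` V \<union> Inr ` {..<k})"
    using sub by blast
  show "acyclic {(x, w). x \<in> N w}"
    by (rule acyclic_if_rank_decreasing[of _ r]) (auto dest: rank)
  show "(Inr i, Inl u) \<notin> {(x, w). x \<in> N w}" for i u
    using arc by blast
  fix u v assume "u \<in> V" "v \<in> V" "u \<noteq> v"
  then show "E u v \<longleftrightarrow> phylogeny_adj {(x, w). x \<in> N w} (Inl u) (Inl v)"
    using cover clique unfolding phylogeny_adj_def Inl_clique_def by (blast dest: arc sym)
qed

definition closed_in_nbhd :: "(('a + nat) \<times> ('a + nat)) set \<Rightarrow> 'a set \<Rightarrow> 'a + nat \<Rightarrow> 'a set" where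
  "closed_in_nbhd A V w = {u \<in> V. Inl u = w \<or> (Inl u, w) \<in> A}"

lemma closed_in_nbhd_adj:
  assumes "phylogeny_digraph V E k A"
    and "u \<in> closed_in_nbhd A V w" "v \<in> closed_in_nbhd A V w" "u \<noteq> v"
  shows "E u v"
proof -
  have "phylogeny_adj A (Inl u) (Inl v)"
    using assms(2-4) unfolding closed_in_nbhd_def phylogeny_adj_def by auto
  then show ?thesis
    using assms unfolding phylogeny_digraph_def closed_in_nbhd_def by auto
qed

lemma closed_in_nbhd_eq_edge:
  assumes D: "phylogeny_digraph V E k A"
    and "u \<in> V" "v \<in> V" "u \<noteq> v" "E u v"
    and no_triangle: "\<And>x. x \<in> V \<Longrightarrow> x \<noteq> u \<Longrightarrow> x \<noteq> v \<Longrightarrow> E u x \<Longrightarrow> E v x \<Longrightarrow> False"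
  obtains w where "closed_in_nbhd A V w = {u, v}"
proof -
  have "phylogeny_adj A (Inl u) (Inl v)"
    using D assms(2-5) unfolding phylogeny_digraph_def by blast
  then obtain w where w: "{u, v} \<subseteq> closed_in_nbhd A V w"
    using assms(2,3) unfolding phylogeny_adj_def closed_in_nbhd_def by blast
  have "x \<in> {u, v}" if x: "x \<in> closed_in_nbhd A V w" for x
  proof (rule ccontr)
    assume "x \<notin> {u, v}"
    then have "E u x" "E v x"
      using closed_in_nbhd_adj[OF D] w x by auto
    moreover have "x \<in> V"
      using x by (simp add: closed_in_nbhd_def)
    ultimately show False
      using no_triangle \<open>x \<notin> {u, v}\<close> by blast
  qed
  with w have "closed_in_nbhd A V w = {u, v}"
    by blast
  then show thesis ..
qed

lemma closed_in_nbhd_pair_arc: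
  assumes D: "phylogeny_digraph V E k A"
    and N: "closed_in_nbhd A V w = {u, v}" and "u \<noteq> v"
  obtains y where "y \<in> {u, v}" "(Inl y, w) \<in> A" "w \<in> Inl ` {u, v} \<union> Inr ` {..<k}"
proof -
  have sub: "A \<subseteq> (Inl ` V \<union> Inr ` {..<k}) \<times> (Inl ` V \<union> Inr ` {..<k})"
    using D unfolding phylogeny_digraph_def by blast
  have "u \<in> closed_in_nbhd A V w" "v \<in> closed_in_nbhd A V w"
    using N by auto
  then have "(Inl u, w) \<in> A \<or> (Inl v, w) \<in> A"
    using \<open>u \<noteq> v\<close> unfolding closed_in_nbhd_def by (metis (mono_tags) Inl_inject mem_Collect_eq)
  then obtain y where y: "y \<in> {u, v}" "(Inl y, w) \<in> A"
    by blast
  then have "w \<in> Inl ` V \<union> Inr ` {..<k}"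
    using subsetD[OF sub] by blast
  moreover have "x \<in> {u, v}" if "w = Inl x" "x \<in> V" for x
    using that N unfolding closed_in_nbhd_def by blast
  ultimately have "w \<in> Inl ` {u, v} \<union> Inr ` {..<k}"
    by blast
  with y show thesis ..
qed

lemma card_le_if_inj_on_into_Plus:
  assumes "inj_on f F" "f ` F \<subseteq> Inl ` T \<union> Inr ` {..<k}" "finite T"
  shows "card F \<le> card T + k"
proof -
  have "card F \<le> card (Inl ` T \<union> Inr ` {..<k})"
    using assms card_image[OF assms(1)] by (metis card_mono finite_Un finite_imageI finite_lessThan)
  also have "\<dots> \<le> card (Inl ` T :: ('b + nat) set) + card (Inr ` {..<k} :: ('b + nat) set)"
    by (rule card_Un_le)
  also have "\<dots> = card T + k"
    by (simp add: card_image)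
  finally show ?thesis .
qed

lemma phylogeny_digraph_card_edges:
  assumes D: "phylogeny_digraph V E k A" and "finite V" "S \<subseteq> V" "S \<noteq> {}"
    and no_triangle: "\<And>u v x. u \<in> S \<Longrightarrow> v \<in> S \<Longrightarrow> u \<noteq> v \<Longrightarrow> E u v \<Longrightarrow>
      x \<in> V \<Longrightarrow> x \<noteq> u \<Longrightarrow> x \<noteq> v \<Longrightarrow> E u x \<Longrightarrow> E v x \<Longrightarrow> False"
  shows "card {{u, v} | u v. u \<in> S \<and> v \<in> S \<and> u \<noteq> v \<and> E u v} + 1 \<le> card S + k"
proof -
  define F where "F = {{u, v} | u v. u \<in> S \<and> v \<in> S \<and> u \<noteq> v \<and> E u v}"
  have "\<exists>w. closed_in_nbhd A V w = e" if "e \<in> F" for e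
  proof -
    obtain u v where "e = {u, v}" "u \<in> S" "v \<in> S" "u \<noteq> v" "E u v"
      using \<open>e \<in> F\<close> unfolding F_def by blast
    with \<open>S \<subseteq> V\<close> show ?thesis
      by (metis closed_in_nbhd_eq_edge[OF D] no_triangle subsetD)
  qed
  then obtain cov where cov: "\<And>e. e \<in> F \<Longrightarrow> closed_in_nbhd A V (cov e) = e"
    by metis
  then have "inj_on cov F"
    by (metis inj_onI)
  have "finite A" "acyclic A"
    using D \<open>finite V\<close> unfolding phylogeny_digraph_def by (auto intro: finite_subset)
  then have "wf A"
    by (rule finite_acyclic_wf)
  then obtain s where "s \<in> S" and source: "\<And>y. y \<in> S \<Longrightarrow> (Inl y, Inl s) \<notin> A"
    using \<open>S \<noteq> {}\<close> unfolding wf_eq_minimal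
    by (drule_tac x = "Inl ` S" in spec) blast
  have "cov e \<in> Inl ` (S - {s}) \<union> Inr ` {..<k}" if "e \<in> F" for e
  proof -
    obtain u v where e: "e = {u, v}" "u \<in> S" "v \<in> S" "u \<noteq> v"
      using \<open>e \<in> F\<close> unfolding F_def by blast
    have "closed_in_nbhd A V (cov e) = {u, v}"
      using cov \<open>e \<in> F\<close> e(1) by blast
    then obtain y where "y \<in> {u, v}" "(Inl y, cov e) \<in> A" and w: "cov e \<in> Inl ` {u, v} \<union> Inr ` {..<k}"
      using closed_in_nbhd_pair_arc[OF D _ \<open>u \<noteq> v\<close>] by blast
    moreover from this have "cov e \<noteq> Inl s"
      using source e by auto
    ultimately show ?thesis
      using e by auto
  qed
  moreover have "finite S"
    using \<open>S \<subseteq> V\<close> \<open>finite V\<close> by (rule finite_subset)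
  ultimately have "card F \<le> card (S - {s}) + k"
    using \<open>inj_on cov F\<close> by (intro card_le_if_inj_on_into_Plus) auto
  moreover have "card (S - {s}) + 1 = card S"
    using \<open>finite S\<close> \<open>s \<in> S\<close> by (metis Suc_eq_plus1 card_Suc_Diff1)
  ultimately show ?thesis
    unfolding F_def by linarith
qed

section \<open>The graph G_l\<close>

text \<open>The ladder P_{l+1} x P_2 has vertices (i, j) with i \<le> l, j < 2; its corner (0, 0)
  is the vertex Inl 0 of K_{l+2} it is glued to.\<close>
definition ladder_vtx :: "nat \<times> nat \<Rightarrow> nat + nat \<times> nat" where
  "ladder_vtx p = (if p = (0, 0) then Inl 0 else Inr p)"

abbreviation ladder_node :: "nat \<times> nat \<Rightarrow> (nat + nat \<times> nat) + nat" where
  "ladder_node p \<equiv> Inl (ladder_vtx p)"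

lemma ladder_vtx_eq_iff [simp]: "ladder_vtx p = ladder_vtx q \<longleftrightarrow> p = q"
  by (auto simp: ladder_vtx_def)

lemma ladder_vtx_eq_Inl [simp]: "ladder_vtx p = Inl k \<longleftrightarrow> p = (0, 0) \<and> k = 0"
  by (auto simp: ladder_vtx_def)

lemma Inl_eq_ladder_vtx [simp]: "Inl k = ladder_vtx p \<longleftrightarrow> p = (0, 0) \<and> k = 0"
  by (auto simp: ladder_vtx_def)

definition ladder_adj :: "nat \<Rightarrow> nat \<times> nat \<Rightarrow> nat \<times> nat \<Rightarrow> bool" where
  "ladder_adj l p q \<longleftrightarrow> fst p \<le> l \<and> fst q \<le> l \<and> snd p < 2 \<and> snd q < 2 \<and>
     ((fst p = fst q \<and> snd p \<noteq> snd q) \<or> (snd p = snd q \<and> (fst p + 1 = fst q \<or> fst q + 1 = fst p)))"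

lemma ladder_adj_sym: "ladder_adj l p q \<Longrightarrow> ladder_adj l q p"
  by (auto simp: ladder_adj_def)

lemma ladder_adj_in_ladder: "ladder_adj l p q \<Longrightarrow> p \<in> {..l} \<times> {..<2} \<and> q \<in> {..l} \<times> {..<2}"
  by (auto simp: ladder_adj_def mem_Times_iff)

lemma ladder_adj_cases:
  assumes "ladder_adj l p q"
  obtains (rung) i where "i \<le> l" "{p, q} = {(i, 0), (i, 1)}"
    | (rail) i j where "i < l" "j < 2" "{p, q} = {(i, j), (i + 1, j)}"
proof -
  obtain a b c d where pq: "p = (a, b)" "q = (c, d)"
    by (metis prod.exhaust)
  consider "a = c" "a \<le> l" "b = 0 \<and> d = 1 \<or> b = 1 \<and> d = 0" | "b = d" "b < 2" "c = a + 1" "c \<le> l"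
    | "b = d" "b < 2" "a = c + 1" "a \<le> l"
    using assms unfolding pq ladder_adj_def by (auto simp: less_2_cases_iff)
  then show thesis
  proof cases
    case 1
    then show thesis
      using that(1)[of a] unfolding pq by (auto simp: insert_commute)
  next
    case 2
    then show thesis
      using that(2)[of a b] unfolding pq by simp
  next
    case 3
    then show thesis
      using that(2)[of c b] unfolding pq by (simp add: insert_commute)
  qed
qed

lemma ladder_adj_neq: "ladder_adj l p q \<Longrightarrow> p \<noteq> q"
  by (auto simp: ladder_adj_def)

lemma ladder_adj_parity: "ladder_adj l p q \<Longrightarrow> even (fst p + snd p) \<longleftrightarrow> odd (fst q + snd q)"
  by (cases p; cases q) (simp add: ladder_adj_def; presburger)

lemma Gl_V_eq: "Gl_V l = Inl ` {..<l + 2} \<union> ladder_vtx ` ({..l} \<times> {..<2})"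
proof -
  have "Inr ` (({..<l + 1} \<times> {..<2}) - {(0, 0)}) \<union> {Inl 0} = ladder_vtx ` ({..l} \<times> {..<2})"
    unfolding ladder_vtx_def by (auto simp: image_iff)
  then show ?thesis
    unfolding Gl_V_def glue_V_def complete_V_def cart_V_def path_V_def by auto
qed

lemma Inl_in_Gl_V [simp]: "Inl k \<in> Gl_V l \<longleftrightarrow> k < l + 2"
  by (auto simp: Gl_V_eq ladder_vtx_def)

lemma Inr_in_Gl_V [simp]: "Inr (i, j) \<in> Gl_V l \<longleftrightarrow> i \<le> l \<and> j < 2 \<and> (i, j) \<noteq> (0, 0)"
  by (auto simp: Gl_V_eq ladder_vtx_def image_iff)

lemma Gl_E_eq: "Gl_E l x y \<longleftrightarrow> x \<noteq> y \<and>
   ((\<exists>u v. u < l + 2 \<and> v < l + 2 \<and> x = Inl u \<and> y = Inl v) \<or>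
    (\<exists>p q. ladder_adj l p q \<and> x = ladder_vtx p \<and> y = ladder_vtx q))"
proof -
  have "glue_map 0 (0, 0) (Inr p) = ladder_vtx p" for p
    by (simp add: glue_map_def ladder_vtx_def)
  moreover have "cart_E (path_V (l + 1)) (path_E (l + 1)) (path_V 2) (path_E 2) = ladder_adj l"
    by (auto simp: fun_eq_iff cart_E_def path_V_def path_E_def ladder_adj_def)
  ultimately show ?thesis
    unfolding Gl_E_def glue_E_def complete_E_def by auto
qed

lemma Gl_E_sym: "Gl_E l u v \<Longrightarrow> Gl_E l v u"
  unfolding Gl_E_eq using ladder_adj_sym by blast

lemma Gl_E_ladder: "ladder_adj l p q \<Longrightarrow> Gl_E l (ladder_vtx p) (ladder_vtx q)"
  unfolding Gl_E_eq using ladder_adj_neq by fastforce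

lemma finite_Gl_V: "finite (Gl_V l)"
  unfolding Gl_V_eq by auto

lemma Gl_no_isolated: "\<forall>x\<in>Gl_V l. \<exists>y\<in>Gl_V l. x \<noteq> y \<and> Gl_E l x y"
proof
  fix x assume "x \<in> Gl_V l"
  then consider a where "a < l + 2" "x = Inl a" | i j where "i \<le> l" "j < 2" "x = ladder_vtx (i, j)"
    unfolding Gl_V_eq by auto
  then show "\<exists>y\<in>Gl_V l. x \<noteq> y \<and> Gl_E l x y"
  proof cases
    case 1
    then show ?thesis
      by (intro bexI[of _ "Inl (if a = 0 then 1 else 0)"]) (auto simp: Gl_V_eq Gl_E_eq)
  next
    case 2
    then have "ladder_adj l (i, j) (i, 1 - j)"
      by (simp add: ladder_adj_def) presburger
    moreover have "ladder_vtx (i, 1 - j) \<in> Gl_V l"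
      using 2 unfolding Gl_V_eq by auto
    ultimately show ?thesis
      using 2 Gl_E_ladder ladder_adj_neq by (metis ladder_vtx_eq_iff)
  qed
qed

lemma Gl_E_ladder_vtxD:
  assumes "Gl_E l (ladder_vtx p) x"
  shows "(\<exists>r. ladder_adj l p r \<and> x = ladder_vtx r) \<or> (p = (0, 0) \<and> (\<exists>b. b \<noteq> 0 \<and> x = Inl b))"
  using assms unfolding Gl_E_eq by auto

lemma Gl_ladder_no_triangle:
  assumes "ladder_adj l p q" "Gl_E l (ladder_vtx p) x" "Gl_E l (ladder_vtx q) x"
  shows False
proof -
  have "p \<noteq> q"
    using assms(1) by (rule ladder_adj_neq)
  then obtain r where pr: "ladder_adj l p r" and qr: "ladder_adj l q r"
    using Gl_E_ladder_vtxD[OF assms(2)] Gl_E_ladder_vtxD[OF assms(3)] by auto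
  show False
    using ladder_adj_parity[OF assms(1)] ladder_adj_parity[OF pr] ladder_adj_parity[OF qr] by blast
qed

lemma Gl_E_ladder_iff: "Gl_E l (ladder_vtx p) (ladder_vtx q) \<longleftrightarrow> ladder_adj l p q"
  using Gl_E_ladder Gl_E_ladder_vtxD by fastforce

text \<open>The l + 1 rungs, then the l edges of each rail.\<close>
definition ladder_edge :: "nat \<Rightarrow> nat \<Rightarrow> (nat \<times> nat) \<times> (nat \<times> nat)" where
  "ladder_edge l t = (if t \<le> l then ((t, 0), (t, 1))
     else if t \<le> 2 * l then ((t - l - 1, 0), (t - l, 0)) else ((t - 2 * l - 1, 1), (t - 2 * l, 1)))"

lemma ladder_adj_ladder_edge: "t < 3 * l + 1 \<Longrightarrow> ladder_edge l t = (p, q) \<Longrightarrow> ladder_adj l p q"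
  by (auto simp: ladder_edge_def ladder_adj_def split: if_splits)

lemma ladder_edge_inj:
  "ladder_edge l t = (p, q) \<Longrightarrow> ladder_edge l t' = (p', q') \<Longrightarrow> {p, q} = {p', q'} \<Longrightarrow> t = t'"
  by (auto simp: ladder_edge_def doubleton_eq_iff split: if_splits)

lemma card_Gl_ladder_edges:
  fixes l :: nat
  defines "S \<equiv> ladder_vtx ` ({..l} \<times> {..<2})"
  shows "3 * l + 1 \<le> card {{u, v} | u v. u \<in> S \<and> v \<in> S \<and> u \<noteq> v \<and> Gl_E l u v}"
proof -
  define edge where "edge t = (case ladder_edge l t of (p, q) \<Rightarrow> {ladder_vtx p, ladder_vtx q})" for t
  let ?F = "{{u, v} | u v. u \<in> S \<and> v \<in> S \<and> u \<noteq> v \<and> Gl_E l u v}"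
  have "edge ` {..<3 * l + 1} \<subseteq> ?F"
  proof
    fix e assume "e \<in> edge ` {..<3 * l + 1}"
    then obtain t p q where "t < 3 * l + 1" "ladder_edge l t = (p, q)" "e = {ladder_vtx p, ladder_vtx q}"
      unfolding edge_def by (auto split: prod.splits)
    moreover from this have adj: "ladder_adj l p q"
      by (blast intro: ladder_adj_ladder_edge)
    then have "ladder_vtx p \<in> S" "ladder_vtx q \<in> S" "ladder_vtx p \<noteq> ladder_vtx q"
      using ladder_adj_in_ladder ladder_adj_neq unfolding S_def by auto
    ultimately show "e \<in> ?F"
      using Gl_E_ladder[OF adj] by blast
  qed
  moreover have "inj_on edge {..<3 * l + 1}"
  proof (rule inj_onI)
    fix t t' assume "edge t = edge t'"
    obtain p q p' q' where pq: "ladder_edge l t = (p, q)" "ladder_edge l t' = (p', q')"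
      by (metis prod.exhaust)
    with \<open>edge t = edge t'\<close> have "{p, q} = {p', q'}"
      unfolding edge_def by (auto simp: doubleton_eq_iff)
    with pq show "t = t'"
      by (rule ladder_edge_inj)
  qed
  moreover have "finite ?F"
  proof (rule finite_subset)
    show "?F \<subseteq> Pow S"
      by blast
    show "finite (Pow S)"
      unfolding S_def by simp
  qed
  ultimately have "card (edge ` {..<3 * l + 1}) \<le> card ?F"
    by (intro card_mono)
  then show ?thesis
    using card_image[OF \<open>inj_on edge {..<3 * l + 1}\<close>] by simp
qed

lemma Gl_phylogeny_digraph_extra_ge:
  assumes "phylogeny_digraph (Gl_V l) (Gl_E l) k A"
  shows "l \<le> k"
proof -
  define S where "S = ladder_vtx ` ({..l} \<times> {..<2})"
  have "card S = 2 * l + 2"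
    unfolding S_def by (subst card_image) (auto simp: inj_on_def)
  have "S \<subseteq> Gl_V l" "S \<noteq> {}"
    unfolding S_def Gl_V_eq by (auto simp: lessThan_empty_iff)
  have no_triangle: "False" if "u \<in> S" "v \<in> S" "Gl_E l u v" "Gl_E l u x" "Gl_E l v x" for u v x
  proof -
    obtain p q where "u = ladder_vtx p" "v = ladder_vtx q"
      using \<open>u \<in> S\<close> \<open>v \<in> S\<close> unfolding S_def by blast
    with that(3) have "ladder_adj l p q"
      by (simp add: Gl_E_ladder_iff)
    with that(4,5) show False
      using Gl_ladder_no_triangle \<open>u = ladder_vtx p\<close> \<open>v = ladder_vtx q\<close> by blast
  qed
  have "card {{u, v} | u v. u \<in> S \<and> v \<in> S \<and> u \<noteq> v \<and> Gl_E l u v} + 1 \<le> card S + k"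
    by (rule phylogeny_digraph_card_edges[OF assms finite_Gl_V \<open>S \<subseteq> Gl_V l\<close> \<open>S \<noteq> {}\<close>])
      (rule no_triangle)
  then show ?thesis
    using card_Gl_ladder_edges[of l] \<open>card S = 2 * l + 2\<close> unfolding S_def by linarith
qed

section \<open>Optimal digraphs for G_l\<close>

lemma Gl_clique_ladder_edge: "ladder_adj l p q \<Longrightarrow> Inl_clique (Gl_E l) {ladder_node p, ladder_node q}"
  by (simp add: Inl_clique_pair Gl_E_ladder ladder_adj_sym)

lemma Gl_clique_complete: "Inl_clique (Gl_E l) (Inl ` Inl ` {..<l + 2})"
  by (auto simp: Inl_clique_def Gl_E_eq)

text \<open>The extra vertex Inr 0 is the common prey of K_{l+2}; every ladder edge is the
  in-neighbourhood of a vertex of K_{l+2} or of the ladder.\<close>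
definition comp_in_nbrs :: "nat \<Rightarrow> (nat + nat \<times> nat) + nat \<Rightarrow> ((nat + nat \<times> nat) + nat) set" where
  "comp_in_nbrs l w = (case w of
       Inr n \<Rightarrow> if n = 0 then Inl ` Inl ` {..<l + 2} else {}
     | Inl (Inl k) \<Rightarrow> if k = 0 then {ladder_node (0, 1), ladder_node (1, 1)}
          else if k \<le> l then {ladder_node (k - 1, 0), ladder_node (k, 0)}
          else if k = l + 1 then {ladder_node (0, 0), ladder_node (0, 1)} else {}
     | Inl (Inr (i, j)) \<Rightarrow> if i < l \<and> j = 1 then {ladder_node (i + 1, 0), ladder_node (i + 1, 1)}
          else if 0 < i \<and> i < l \<and> j = 0 then {ladder_node (i, 1), ladder_node (i + 1, 1)} else {})"

definition comp_rank :: "(nat + nat \<times> nat) + nat \<Rightarrow> nat" where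
  "comp_rank w = (case w of Inr n \<Rightarrow> 0 | Inl (Inl k) \<Rightarrow> if k = 0 then 2 else 1
     | Inl (Inr (i, j)) \<Rightarrow> 2 * i + j + 2)"

lemma comp_rank_ladder_node: "comp_rank (ladder_node p) = 2 * fst p + snd p + 2"
  by (cases p) (auto simp: comp_rank_def ladder_vtx_def)

lemma comp_rank_decreasing: "x \<in> comp_in_nbrs l w \<Longrightarrow> comp_rank w < comp_rank x"
  by (auto simp: comp_in_nbrs_def comp_rank_ladder_node split: sum.splits if_splits)
    (auto simp: comp_rank_def)

lemma comp_in_nbrs_clique:
  assumes "0 < l"
  shows "Inl_clique (Gl_E l) (comp_in_nbrs l w)"
  using assms Gl_clique_complete[of l] unfolding comp_in_nbrs_def
  by (auto split: sum.split if_split intro!: Gl_clique_ladder_edge simp: ladder_adj_def)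

lemma comp_in_nbrs_mem:
  assumes "x \<in> comp_in_nbrs l w" "0 < l"
  shows "x \<in> Inl ` Gl_V l \<union> Inr ` {..<1} \<and> w \<in> Inl ` Gl_V l \<union> Inr ` {..<1}"
  using assms unfolding comp_in_nbrs_def
  by (auto simp: ladder_vtx_def split: sum.splits if_splits)

lemma comp_in_nbrs_cover_ladder:
  assumes "ladder_adj l p q"
  shows "\<exists>w. ladder_node p \<in> comp_in_nbrs l w \<and> ladder_node q \<in> comp_in_nbrs l w"
  using assms
proof (cases rule: ladder_adj_cases)
  case (rung i)
  show ?thesis
  proof (cases "i = 0")
    case True
    with rung show ?thesis
      by (intro exI[of _ "Inl (Inl (l + 1))"]) (auto simp: comp_in_nbrs_def doubleton_eq_iff)
  next
    case False
    with rung show ?thesis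
      by (intro exI[of _ "Inl (Inr (i - 1, 1))"]) (auto simp: comp_in_nbrs_def doubleton_eq_iff)
  qed
next
  case (rail i j)
  consider "j = 0" | "j = 1" "i = 0" | "j = 1" "i > 0"
    using rail by linarith
  then show ?thesis
  proof cases
    case 1
    with rail show ?thesis
      by (intro exI[of _ "Inl (Inl (i + 1))"]) (auto simp: comp_in_nbrs_def doubleton_eq_iff)
  next
    case 2
    with rail show ?thesis
      by (intro exI[of _ "Inl (Inl 0)"]) (auto simp: comp_in_nbrs_def doubleton_eq_iff)
  next
    case 3
    with rail show ?thesis
      by (intro exI[of _ "Inl (Inr (i, 0))"]) (auto simp: comp_in_nbrs_def doubleton_eq_iff)
  qed
qed

lemma Gl_competition_digraph:
  assumes "0 < l"
  shows "competition_digraph (Gl_V l) (Gl_E l) 1 {(x, w). x \<in> comp_in_nbrs l w}"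
proof (rule competition_digraphI[where r = comp_rank])
  fix u v assume "Gl_E l u v"
  then consider a b where "a < l + 2" "b < l + 2" "u = Inl a" "v = Inl b"
    | p q where "ladder_adj l p q" "u = ladder_vtx p" "v = ladder_vtx q"
    unfolding Gl_E_eq by blast
  then show "\<exists>w. Inl u \<in> comp_in_nbrs l w \<and> Inl v \<in> comp_in_nbrs l w"
  proof cases
    case 1
    then show ?thesis
      by (intro exI[of _ "Inr 0"]) (auto simp: comp_in_nbrs_def)
  next
    case 2
    then show ?thesis
      using comp_in_nbrs_cover_ladder by blast
  qed
qed (use assms comp_in_nbrs_mem comp_rank_decreasing comp_in_nbrs_clique in blast)+

text \<open>The extra vertex Inr n is the common prey of rung n + 1; every other edge is an arc,
  pointing into the vertex 0 of K_{l+2}, along a rail, or along rung 0.\<close>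
definition phyl_in_nbrs :: "nat \<Rightarrow> (nat + nat \<times> nat) + nat \<Rightarrow> ((nat + nat \<times> nat) + nat) set" where
  "phyl_in_nbrs l w = (case w of
       Inr n \<Rightarrow> if n < l then {ladder_node (n + 1, 0), ladder_node (n + 1, 1)} else {}
     | Inl (Inl k) \<Rightarrow> if k = 0 then Inl ` Inl ` {1..l + 1} else {}
     | Inl (Inr (i, j)) \<Rightarrow> if 1 \<le> i \<and> i \<le> l \<and> j < 2 then {ladder_node (i - 1, j)}
          else if i = 0 \<and> j = 1 then {ladder_node (0, 0)} else {})"

definition phyl_rank :: "nat \<Rightarrow> (nat + nat \<times> nat) + nat \<Rightarrow> int" where
  "phyl_rank l w = (case w of Inr n \<Rightarrow> - (2 * int l + 3) | Inl (Inl k) \<Rightarrow> if k = 0 then 0 else 1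
     | Inl (Inr (i, j)) \<Rightarrow> - 1 - 2 * int i - int j)"

lemma phyl_rank_decreasing: "x \<in> phyl_in_nbrs l w \<Longrightarrow> phyl_rank l w < phyl_rank l x"
  by (auto simp: phyl_in_nbrs_def ladder_vtx_def phyl_rank_def split: sum.splits if_splits)

lemma phyl_in_nbrs_mem:
  assumes "x \<in> phyl_in_nbrs l w"
  shows "x \<in> Inl ` Gl_V l \<union> Inr ` {..<l} \<and> w \<in> Inl ` Gl_V l \<union> Inr ` {..<l}"
  using assms unfolding phyl_in_nbrs_def
  by (auto simp: ladder_vtx_def split: sum.splits if_splits)

lemma phyl_in_nbrs_arc:
  assumes "x \<in> phyl_in_nbrs l (Inl v)"
  shows "\<exists>u. x = Inl u \<and> Gl_E l u v"
proof (cases v)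
  case (Inl k)
  then show ?thesis
    using assms by (auto simp: phyl_in_nbrs_def Gl_E_eq split: if_splits)
next
  case (Inr p)
  obtain i j where "p = (i, j)"
    by (metis prod.exhaust)
  then obtain q where "x = ladder_node q" "ladder_adj l q (i, j)" "(i, j) \<noteq> (0, 0)"
    using assms Inr by (auto simp: phyl_in_nbrs_def ladder_adj_def split: if_splits)
  moreover have "v = ladder_vtx (i, j)"
    using Inr \<open>p = (i, j)\<close> \<open>(i, j) \<noteq> (0, 0)\<close> by (simp add: ladder_vtx_def)
  ultimately show ?thesis
    using Gl_E_ladder by blast
qed

lemma phyl_in_nbrs_clique: "Inl_clique (Gl_E l) (phyl_in_nbrs l w)"
  using Gl_clique_complete[of l] unfolding phyl_in_nbrs_def
  by (auto split: sum.split if_split intro!: Gl_clique_ladder_edge intro: Inl_clique_subset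
    simp: ladder_adj_def)

lemma phyl_in_nbrs_cover_ladder:
  assumes "ladder_adj l p q"
  shows "ladder_node p \<in> phyl_in_nbrs l (ladder_node q) \<or> ladder_node q \<in> phyl_in_nbrs l (ladder_node p) \<or>
    (\<exists>w. ladder_node p \<in> phyl_in_nbrs l w \<and> ladder_node q \<in> phyl_in_nbrs l w)"
  using assms
proof (cases rule: ladder_adj_cases)
  case (rung i)
  show ?thesis
  proof (cases "i = 0")
    case True
    with rung show ?thesis
      by (auto simp: phyl_in_nbrs_def ladder_vtx_def doubleton_eq_iff)
  next
    case False
    with rung show ?thesis
      by (intro disjI2 exI[of _ "Inr (i - 1)"]) (auto simp: phyl_in_nbrs_def doubleton_eq_iff)
  qed
next
  case (rail i j)
  then show ?thesis
    by (auto simp: phyl_in_nbrs_def ladder_vtx_def doubleton_eq_iff)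
qed

lemma Gl_phylogeny_digraph: "phylogeny_digraph (Gl_V l) (Gl_E l) l {(x, w). x \<in> phyl_in_nbrs l w}"
proof (rule phylogeny_digraphI[where r = "phyl_rank l"])
  fix u v assume "Gl_E l u v"
  then consider a b where "a < l + 2" "b < l + 2" "a \<noteq> b" "u = Inl a" "v = Inl b"
    | p q where "ladder_adj l p q" "u = ladder_vtx p" "v = ladder_vtx q"
    unfolding Gl_E_eq by blast
  then show "Inl u \<in> phyl_in_nbrs l (Inl v) \<or> Inl v \<in> phyl_in_nbrs l (Inl u) \<or>
      (\<exists>w. Inl u \<in> phyl_in_nbrs l w \<and> Inl v \<in> phyl_in_nbrs l w)"
  proof cases
    case 1
    then show ?thesis
      by (cases "a = 0 \<or> b = 0") (auto simp: phyl_in_nbrs_def intro!: exI[of _ "Inl (Inl 0)"])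
  next
    case 2
    then show ?thesis
      using phyl_in_nbrs_cover_ladder by blast
  qed
qed (use phyl_in_nbrs_mem phyl_rank_decreasing Gl_E_sym phyl_in_nbrs_arc phyl_in_nbrs_clique in blast)+

theorem mainTheorem12:
  fixes l :: nat
  assumes "0 < l"
  shows "competition_number (Gl_V l) (Gl_E l) = 1 \<and> phylogeny_number (Gl_V l) (Gl_E l) = l"
proof
  show "competition_number (Gl_V l) (Gl_E l) = 1"
    unfolding competition_number_Least
  proof (rule Least_equality)
    show "\<exists>A. competition_digraph (Gl_V l) (Gl_E l) 1 A"
      using Gl_competition_digraph[OF assms] by (rule exI)
    fix k assume "\<exists>A. competition_digraph (Gl_V l) (Gl_E l) k A"
    moreover have "Inl 0 \<in> Gl_V l"
      by simp
    then have "\<not> competition_digraph (Gl_V l) (Gl_E l) 0 A" for A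
      using no_competition_digraph_0[OF finite_Gl_V Gl_no_isolated] by blast
    ultimately show "1 \<le> k"
      by (cases k) auto
  qed
  show "phylogeny_number (Gl_V l) (Gl_E l) = l"
    unfolding phylogeny_number_Least
  proof (rule Least_equality)
    show "\<exists>A. phylogeny_digraph (Gl_V l) (Gl_E l) l A"
      using Gl_phylogeny_digraph by (rule exI)
    show "l \<le> k" if "\<exists>A. phylogeny_digraph (Gl_V l) (Gl_E l) k A" for k
      using that Gl_phylogeny_digraph_extra_ge by (elim exE)
  qed
qed

end
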